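(* Let $d$ and $m$ be positive integers and let $P$ be a finite poset such that $|P|> m$ and every subset $S$ of $P$ with $|S|>m$ satisfies $\mathrm{comp}(S)\geq |S|d$. Then there exists a function \[f:\binom{P}{\leq |P|/(2d+1)}\to\binom{P}{\leq m}\] such that for every antichain $I\subseteq P$ there is a subset $T\subseteq I$ with $|T|\leq |P|/(2d+1)$, $T\cap f(T)=\emptyset$ and $I\subseteq T\cup f(T)$.
   Context: For a set $X$ and real $j$, $\binom{X}{\leq j}$ denotes the family of all subsets of $X$ of cardinality at most $j$. $\mathrm{comp}(S)$ is the number of unordered pairs of distinct comparable elements of $S$. An antichain is a set of pairwise incomparable elements. *)

theory Defs
  imports Complex_Main
begin

definition comp :: "'a::order set \<Rightarrow> nat" where
  "comp S = card {{x, y} | x y. x \<in> S \<and> y \<in> S \<and> x \<noteq> y \<and> (x \<le> y \<or> y \<le> x)}"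

definition antichain :: "'a::order set \<Rightarrow> bool" where
  "antichain S \<longleftrightarrow> (\<forall>x\<in>S. \<forall>y\<in>S. x \<noteq> y \<longrightarrow> \<not> (x \<le> y) \<and> \<not> (y \<le> x))"

definition subsets_le :: "'a set \<Rightarrow> real \<Rightarrow> 'a set set" where
  "subsets_le X j = {A. A \<subseteq> X \<and> real (card A) \<le> j}"

end

theory Submission
  imports Defs
begin

text \<open>This is the graph container method of Kleitman and Winston applied to the
comparability graph of \<open>P\<close>. Given an antichain \<open>I\<close>, repeatedly take an element \<open>v\<close> of
maximum comparability degree in the current set \<open>A\<close>: if \<open>v \<in> I\<close>, record \<open>v\<close> in the
fingerprint \<open>T\<close> and delete \<open>v\<close> together with everything comparable to it (no element of
\<open>I\<close> is lost, as \<open>I\<close> is an antichain); otherwise delete only \<open>v\<close>. Stop when at most \<open>m\<close>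
elements remain; they form the container. While more than \<open>m\<close> elements remain,
\<open>comp A \<ge> |A| d\<close> forces the maximum degree to be at least \<open>2d\<close>, so each recorded
element removes at least \<open>2d + 1\<close> elements and \<open>|T| \<le> |P|/(2d + 1)\<close>. Every decision
of the run depends on \<open>I\<close> only through \<open>T\<close>, so running the procedure with \<open>T\<close> in place
of \<open>I\<close> yields the same container, which is therefore a function of \<open>T\<close> alone.\<close>

definition comparables :: "'a::order set \<Rightarrow> 'a \<Rightarrow> 'a set" where
  "comparables A v = {u \<in> A. u \<le> v \<or> v \<le> u}"

lemma comp_eq_card_less_pairs:
  "comp A = card {(x, y). x \<in> A \<and> y \<in> A \<and> x < y}"
proof -
  let ?L = "{(x, y). x \<in> A \<and> y \<in> A \<and> x < y}"
  have "{{x, y} | x y. x \<in> A \<and> y \<in> A \<and> x \<noteq> y \<and> (x \<le> y \<or> y \<le> x)}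
        = (\<lambda>(x, y). {x, y}) ` ?L"
    by (auto simp: image_iff less_le)
  moreover have "inj_on (\<lambda>(x, y). {x, y}) ?L"
    by (auto simp: inj_on_def doubleton_eq_iff dest: less_asym)
  ultimately show ?thesis
    unfolding comp_def by (simp add: card_image)
qed

lemma sum_card_comparables:
  assumes "finite A"
  shows "(\<Sum>v\<in>A. card (comparables A v)) = 2 * comp A + card A"
proof -
  let ?L = "{(x, y). x \<in> A \<and> y \<in> A \<and> x < y}"
  have split: "card (comparables A v) = card {u \<in> A. v < u} + card {u \<in> A. u < v} + 1"
    if "v \<in> A" for v
  proof -
    have "comparables A v = insert v ({u \<in> A. v < u} \<union> {u \<in> A. u < v})"
      using that by (auto simp: comparables_def less_le)
    moreover have "{u \<in> A. v < u} \<inter> {u \<in> A. u < v} = {}" by auto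
    ultimately show ?thesis
      using assms by (simp add: card_Un_disjoint)
  qed
  have up: "(\<Sum>v\<in>A. card {u \<in> A. v < u}) = card ?L"
  proof -
    have "?L = Sigma A (\<lambda>v. {u \<in> A. v < u})" by auto
    then show ?thesis using assms by (simp add: card_SigmaI)
  qed
  have down: "(\<Sum>v\<in>A. card {u \<in> A. u < v}) = card ?L"
  proof -
    have "?L = prod.swap ` Sigma A (\<lambda>v. {u \<in> A. u < v})" by (auto simp: image_iff)
    then show ?thesis using assms by (simp add: card_image card_SigmaI)
  qed
  have "(\<Sum>v\<in>A. card (comparables A v))
        = (\<Sum>v\<in>A. card {u \<in> A. v < u} + card {u \<in> A. u < v} + 1)"
    using split by (intro sum.cong) auto
  also have "\<dots> = card ?L + card ?L + card A"
    by (simp only: sum.distrib up down) simp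
  finally show ?thesis
    by (simp add: comp_eq_card_less_pairs)
qed

definition pivot :: "'a::order set \<Rightarrow> 'a" where
  "pivot A = arg_max_on (\<lambda>v. card (comparables A v)) A"

lemma pivot_in_and_maximal:
  assumes "finite A" "A \<noteq> {}"
  shows "pivot A \<in> A \<and> (\<forall>u\<in>A. card (comparables A u) \<le> card (comparables A (pivot A)))"
proof -
  obtain v where "v \<in> A" using assms(2) by blast
  moreover have "\<forall>u. u \<in> A \<longrightarrow> card (comparables A u) < Suc (card A)"
    using assms(1) by (simp add: comparables_def le_imp_less_Suc card_mono)
  ultimately show ?thesis
    using arg_max_nat_lemma[of "\<lambda>u. u \<in> A" v "\<lambda>u. card (comparables A u)"]
    unfolding pivot_def arg_max_on_def by simp
qed

lemma card_comparables_pivot_ge: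
  assumes "finite A" "A \<noteq> {}" "card A * d \<le> comp A"
  shows "2 * d + 1 \<le> card (comparables A (pivot A))"
proof -
  have "card A * (2 * d + 1) = 2 * (card A * d) + card A"
    by (simp add: algebra_simps)
  also have "\<dots> \<le> (\<Sum>v\<in>A. card (comparables A v))"
    using assms(3) sum_card_comparables[OF assms(1)] by linarith
  also have "\<dots> \<le> of_nat (card A) * card (comparables A (pivot A))"
    by (rule sum_bounded_above) (use pivot_in_and_maximal[OF assms(1,2)] in blast)
  finally have "card A * (2 * d + 1) \<le> card A * card (comparables A (pivot A))"
    by simp
  moreover have "0 < card A"
    using assms(1,2) by (simp add: card_gt_0_iff)
  ultimately show ?thesis
    by (simp only: nat_mult_le_cancel1)
qed

lemma finite_nonempty_if_card_gt: "m < card A \<Longrightarrow> finite A \<and> A \<noteq> {}"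
  using card_gt_0_iff[of A] by simp

lemma pivot_in_card_gt: "m < card A \<Longrightarrow> pivot A \<in> A"
  using finite_nonempty_if_card_gt pivot_in_and_maximal by blast

lemma card_Diff_pivot_less:
  assumes "m < card A" "pivot A \<in> B"
  shows "card (A - B) < card A"
proof (rule psubset_card_mono)
  show "finite A" using finite_nonempty_if_card_gt[OF assms(1)] by blast
  show "A - B \<subset> A" using pivot_in_card_gt[OF assms(1)] assms(2) by blast
qed

lemma pivot_in_comparables: "m < card A \<Longrightarrow> pivot A \<in> comparables A (pivot A)"
  using pivot_in_card_gt by (simp add: comparables_def)

function fingerprint_container :: "nat \<Rightarrow> 'a::order set \<Rightarrow> 'a set \<Rightarrow> 'a set \<times> 'a set" where
  "fingerprint_container m J A =
     (if card A \<le> m then ({}, A)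
      else if pivot A \<in> J
      then apfst (insert (pivot A))
             (fingerprint_container m J (A - comparables A (pivot A)))
      else fingerprint_container m J (A - {pivot A}))"
  by pat_completeness auto
termination
  by (relation "measure (\<lambda>(m, J, A). card A)")
     (auto simp: not_le intro: card_Diff_pivot_less pivot_in_comparables)

lemma fingerprint_container_small:
  "card A \<le> m \<Longrightarrow> fingerprint_container m J A = ({}, A)"
  by simp

lemma fingerprint_container_keep:
  "m < card A \<Longrightarrow> pivot A \<in> J \<Longrightarrow> fingerprint_container m J A
     = apfst (insert (pivot A)) (fingerprint_container m J (A - comparables A (pivot A)))"
  by simp

lemma fingerprint_container_skip:
  "m < card A \<Longrightarrow> pivot A \<notin> J \<Longrightarrow>
     fingerprint_container m J A = fingerprint_container m J (A - {pivot A})"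
  by simp

declare fingerprint_container.simps [simp del]

lemma fingerprint_container_induct [case_names small keep skip]:
  assumes small: "\<And>A. card A \<le> m \<Longrightarrow> Q A"
    and keep: "\<And>A. m < card A \<Longrightarrow> pivot A \<in> J \<Longrightarrow> Q (A - comparables A (pivot A)) \<Longrightarrow> Q A"
    and skip: "\<And>A. m < card A \<Longrightarrow> pivot A \<notin> J \<Longrightarrow> Q (A - {pivot A}) \<Longrightarrow> Q A"
  shows "Q A"
proof (induction A rule: measure_induct_rule[of card])
  case (less A)
  show ?case
    using less card_Diff_pivot_less[of m A] pivot_in_comparables[of m A] small keep skip
    by (cases "card A \<le> m"; cases "pivot A \<in> J") auto
qed

lemmas fingerprint_container_unfold =
  fingerprint_container_small fingerprint_container_keep fingerprint_container_skip

lemma container_subset_card_le: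
  "snd (fingerprint_container m J A) \<subseteq> A \<and> card (snd (fingerprint_container m J A)) \<le> m"
  by (induction A rule: fingerprint_container_induct[where m = m and J = J])
     (auto simp: fingerprint_container_unfold)

lemma fingerprint_subset: "fst (fingerprint_container m J A) \<subseteq> A \<inter> J"
  by (induction A rule: fingerprint_container_induct[where m = m and J = J])
     (auto simp: fingerprint_container_unfold pivot_in_card_gt)

lemma fingerprint_container_disjoint:
  "fst (fingerprint_container m J A) \<inter> snd (fingerprint_container m J A) = {}"
proof (induction A rule: fingerprint_container_induct[where m = m and J = J])
  case (keep A)
  then show ?case
    using container_subset_card_le[of m J "A - comparables A (pivot A)"]
      pivot_in_comparables[OF keep(1)]
    by (auto simp: fingerprint_container_keep)
qed (auto simp: fingerprint_container_unfold)

lemma antichain_subset_fingerprint_container: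
  assumes "antichain J"
  shows "J \<inter> A \<subseteq> fst (fingerprint_container m J A) \<union> snd (fingerprint_container m J A)"
proof (induction A rule: fingerprint_container_induct[where m = m and J = J])
  case (keep A)
  have "J \<inter> A \<subseteq> insert (pivot A) (J \<inter> (A - comparables A (pivot A)))"
    using assms keep(2) by (auto simp: antichain_def comparables_def)
  then show ?case
    using keep by (auto simp: fingerprint_container_keep)
next
  case (skip A)
  then show ?case
    by (auto simp: fingerprint_container_skip)
qed (simp add: fingerprint_container_small)

lemma container_eq_if_fingerprint:
  "K \<inter> A = fst (fingerprint_container m J A) \<Longrightarrow>
     snd (fingerprint_container m K A) = snd (fingerprint_container m J A)"
proof (induction A arbitrary: K rule: fingerprint_container_induct[where m = m and J = J])
  case (small A)
  then show ?case by (simp add: fingerprint_container_small)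
next
  case (keep A)
  let ?A' = "A - comparables A (pivot A)"
  have fingerprint:
    "fst (fingerprint_container m J A) = insert (pivot A) (fst (fingerprint_container m J ?A'))"
    using keep(1,2) by (simp add: fingerprint_container_keep)
  then have "pivot A \<in> K"
    using keep.prems by blast
  moreover have "K \<inter> ?A' = fst (fingerprint_container m J ?A')"
  proof -
    have "K \<inter> ?A' = (K \<inter> A) \<inter> ?A'" by blast
    also have "\<dots> = insert (pivot A) (fst (fingerprint_container m J ?A')) \<inter> ?A'"
      using keep.prems fingerprint by simp
    also have "\<dots> = fst (fingerprint_container m J ?A')"
      using fingerprint_subset[of m J ?A'] pivot_in_comparables[OF keep(1)] by blast
    finally show ?thesis .
  qed
  ultimately show ?case
    using keep by (simp add: fingerprint_container_keep)
next
  case (skip A)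
  let ?A' = "A - {pivot A}"
  have fingerprint: "fst (fingerprint_container m J A) = fst (fingerprint_container m J ?A')"
    using skip(1,2) by (simp add: fingerprint_container_skip)
  then have "pivot A \<notin> K"
    using skip.prems fingerprint_subset[of m J ?A'] pivot_in_card_gt[OF skip(1)] by blast
  moreover from this have "K \<inter> ?A' = fst (fingerprint_container m J ?A')"
    using skip.prems fingerprint by blast
  ultimately show ?case
    using skip by (simp add: fingerprint_container_skip)
qed

lemma card_fingerprint_mult_le:
  assumes "\<forall>S \<subseteq> A. m < card S \<longrightarrow> card S * d \<le> comp S"
  shows "card (fst (fingerprint_container m J A)) * (2 * d + 1) \<le> card A"
  using assms
proof (induction A rule: fingerprint_container_induct[where m = m and J = J])
  case (small A)
  then show ?case by (simp add: fingerprint_container_small)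
next
  case (keep A)
  let ?N = "comparables A (pivot A)"
  have fin: "finite A" "A \<noteq> {}"
    using finite_nonempty_if_card_gt[OF keep(1)] by blast+
  have "2 * d + 1 \<le> card ?N"
    using card_comparables_pivot_ge[OF fin] keep(1) keep.prems by blast
  moreover have "card (A - ?N) = card A - card ?N" "card ?N \<le> card A"
    using fin(1) by (auto simp: comparables_def intro: card_Diff_subset card_mono)
  moreover have "card (fst (fingerprint_container m J A))
                   \<le> card (fst (fingerprint_container m J (A - ?N))) + 1"
    using keep(1,2) by (simp add: fingerprint_container_keep card_insert_le_m1)
  then have "card (fst (fingerprint_container m J A)) * (2 * d + 1)
               \<le> card (fst (fingerprint_container m J (A - ?N))) * (2 * d + 1) + (2 * d + 1)"
    by (metis add_mult_distrib mult_1 mult_le_mono1)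
  moreover have "card (fst (fingerprint_container m J (A - ?N))) * (2 * d + 1) \<le> card (A - ?N)"
    using keep.IH keep.prems by blast
  ultimately show ?case
    by linarith
next
  case (skip A)
  have "card (fst (fingerprint_container m J (A - {pivot A}))) * (2 * d + 1)
          \<le> card (A - {pivot A})"
    using skip.IH skip.prems by blast
  moreover have "card (A - {pivot A}) \<le> card A"
    using finite_nonempty_if_card_gt[OF skip(1)] by (simp add: card_Diff1_le)
  ultimately show ?case
    unfolding fingerprint_container_skip[OF skip(1,2)] by linarith
qed

lemma real_le_divide_if_mult_le:
  fixes a b d :: nat
  assumes "a * (2 * d + 1) \<le> b"
  shows "real a \<le> real b / (2 * real d + 1)"
proof -
  have "real (a * (2 * d + 1)) \<le> real b"
    using assms by (rule of_nat_mono)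
  then have "real a * (2 * real d + 1) \<le> real b"
    by (simp only: of_nat_mult of_nat_add of_nat_1 of_nat_numeral)
  moreover have "(0::real) < 2 * real d + 1"
    by simp
  ultimately show ?thesis
    by (simp only: pos_le_divide_eq)
qed

theorem mainTheorem13:
  fixes P :: "'a::order set" and d m :: nat
  assumes "d > 0" and "m > 0"
    and "finite P"
    and "card P > m"
    and "\<forall>S. S \<subseteq> P \<and> card S > m \<longrightarrow> comp S \<ge> card S * d"
  shows "\<exists>f. (\<forall>T \<in> subsets_le P (real (card P) / (2 * real d + 1)). f T \<in> subsets_le P (real m))
          \<and> (\<forall>I. I \<subseteq> P \<and> antichain I \<longrightarrow>
               (\<exists>T. T \<subseteq> I \<and> real (card T) \<le> real (card P) / (2 * real d + 1)
                    \<and> T \<inter> f T = {} \<and> I \<subseteq> T \<union> f T))"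
proof -
  let ?f = "\<lambda>T. snd (fingerprint_container m T P)"
  have "?f T \<in> subsets_le P (real m)" for T
    using container_subset_card_le[of m T P] by (simp add: subsets_le_def)
  moreover have "\<exists>T. T \<subseteq> I \<and> real (card T) \<le> real (card P) / (2 * real d + 1)
                    \<and> T \<inter> ?f T = {} \<and> I \<subseteq> T \<union> ?f T"
    if "I \<subseteq> P" "antichain I" for I
  proof (intro exI conjI)
    let ?T = "fst (fingerprint_container m I P)"
    have container: "?f ?T = snd (fingerprint_container m I P)"
      using container_eq_if_fingerprint[of ?T P m I] fingerprint_subset[of m I P] by blast
    show "?T \<subseteq> I"
      using fingerprint_subset by blast
    have "card ?T * (2 * d + 1) \<le> card P"
      using card_fingerprint_mult_le[of P m d I] assms(5) by auto
    then show "real (card ?T) \<le> real (card P) / (2 * real d + 1)"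
      by (rule real_le_divide_if_mult_le)
    show "?T \<inter> ?f ?T = {}"
      using fingerprint_container_disjoint container by simp
    show "I \<subseteq> ?T \<union> ?f ?T"
      using antichain_subset_fingerprint_container[OF that(2), of P m] that(1) container by auto
  qed
  ultimately show ?thesis
    by (intro exI[of _ ?f]) blast
qed

end
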